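(* Let $T$ be an invertible operator in $\mathcal D(\mathcal P_n)$. Then $$K_H(T)=\max\{\varrho[T\phi_n],\varrho[T^{-1}\phi_n]\}=\max\bigl\{d_H(Z(\phi_n),Z(T\phi_n)),\,d_H(Z(T^{-1}\phi_n),Z(\phi_n))\bigr\}.$$
   Context: Let $n\ge 1$ be an integer and $\mathcal P_n$ the complex vector space of polynomials in one complex variable of degree at most $n$; $\phi_k(z)=z^k/k!$. $D$ is differentiation on $\mathcal P_n$, $I$ the identity, and $\mathcal D(\mathcal P_n)$ the linear span of $I,D,\dots,D^n$. For a nonzero $f$, $Z(f)$ is the multiset of roots of $f$ (with multiplicity; empty for nonzero constants); $Z(0)=\mathbb C$. For nonconstant $f$, $\varrho[f]=\max\{|u|:u\in Z(f)\}$. For finite nonempty $A,B\subset\mathbb C$, $d_h(A,B)=\max_{y\in B}\min_{x\in A}|x-y|$ and $d_H(A,B)=\max\{d_h(A,B),d_h(B,A)\}$, with conventions: for $d\in\{d_h,d_H\}$, $d(\emptyset,\emptyset)=0$, $d(A,\emptyset)=d(\emptyset,A)=+\infty$ for $A\ne\emptyset$, and $d(A,B)=0$ if one of $A,B$ equals $\mathbb C$ and the other is nonempty. $K_H(T)=\sup_{f\in\mathcal P_n}d_H(Z(f),Z(Tf))$. *)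

theory Defs
  imports "HOL-Analysis.Analysis" "HOL-Computational_Algebra.Polynomial" "HOL-Library.Extended_Real"
begin

definition Pn :: "nat \<Rightarrow> complex poly set" where
  "Pn n = {p. degree p \<le> n}"

definition phi :: "nat \<Rightarrow> complex poly" where
  "phi k = monom (1 / of_nat (fact k)) k"

text \<open>The operator sum_{k=0}^n a_k D^k; the span D(P_n) consists exactly of these.\<close>
definition diffop :: "nat \<Rightarrow> (nat \<Rightarrow> complex) \<Rightarrow> complex poly \<Rightarrow> complex poly" where
  "diffop n a f = (\<Sum>k\<le>n. smult (a k) ((pderiv ^^ k) f))"

text \<open>Zero set (underlying set of the root multiset); Z 0 = UNIV automatically,
  nonzero constants give the empty set.\<close>
definition Z :: "complex poly \<Rightarrow> complex set" where
  "Z f = {x. poly f x = 0}"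

text \<open>varrho[f] = max modulus of a root, for nonconstant f.\<close>
definition rho :: "complex poly \<Rightarrow> real" where
  "rho f = Max (norm ` Z f)"

definition d_h :: "complex set \<Rightarrow> complex set \<Rightarrow> ereal" where
  "d_h A B =
     (if A = {} \<and> B = {} then 0
      else if A = {} \<or> B = {} then \<infinity>
      else if A = UNIV \<or> B = UNIV then 0
      else ereal (Max ((\<lambda>y. Min ((\<lambda>x. cmod (x - y)) ` A)) ` B)))"

definition d_H :: "complex set \<Rightarrow> complex set \<Rightarrow> ereal" where
  "d_H A B = max (d_h A B) (d_h B A)"

definition K_H :: "nat \<Rightarrow> (complex poly \<Rightarrow> complex poly) \<Rightarrow> ereal" where
  "K_H n T = (SUP f\<in>Pn n. d_H (Z f) (Z (T f)))"

end

(*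
  If T = sum a_k D^k with a_0 \<noteq> 0 and (T f)(w) = 0, then f has a root within rho[T phi_n]
  of w.  Indeed, since the derivatives of T phi_n at 0 are the coefficients a_k, (T f)(w) is the
  apolar form of T phi_n and f(w - x); by Grace's theorem, which follows by induction on the
  degree from Laguerre's theorem on polar derivatives, two apolar polynomials cannot have their
  roots separated by a circle.  The inverse of T is again a differential operator, whose
  coefficients form the inverse power series of a, so the same argument bounds the other
  one-sided distance by rho[T^-1 phi_n].  Both bounds are attained, by f = phi_n and
  f = T^-1 phi_n, because Z(phi_n) = {0}.
*)

theory Submission
  imports
    Defs
    "HOL-Computational_Algebra.Fundamental_Theorem_Algebra"
    "HOL-Computational_Algebra.Formal_Power_Series"
begin

section \<open>Higher derivatives\<close>

lemma higher_pderiv_diff: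
  "(pderiv ^^ k) (p - q) = (pderiv ^^ k) p - (pderiv ^^ k) (q :: 'a :: idom poly)"
  by (induction k) (auto simp: pderiv_diff)

lemma higher_pderiv_eq_0: "degree p < k \<Longrightarrow> (pderiv ^^ k) p = 0"
  by (auto simp: poly_eq_iff coeff_higher_pderiv coeff_eq_0)

lemma higher_pderiv_linear_mult:
  fixes p :: "'a :: idom poly"
  shows "(pderiv ^^ j) ([:-u, 1:] * p) =
           [:-u, 1:] * (pderiv ^^ j) p + smult (of_nat j) ((pderiv ^^ (j - 1)) p)"
proof (induction j)
  case (Suc j)
  have X: "pderiv [:-u, 1:] = (1 :: 'a poly)"
    by (simp add: pderiv_pCons)
  have "(pderiv ^^ Suc j) ([:-u, 1:] * p) =
          pderiv ([:-u, 1:] * (pderiv ^^ j) p + smult (of_nat j) ((pderiv ^^ (j - 1)) p))"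
    using Suc by simp
  also have "\<dots> = [:-u, 1:] * (pderiv ^^ Suc j) p + smult (of_nat (Suc j)) ((pderiv ^^ j) p)"
    by (cases j) (simp_all only: pderiv_add pderiv_mult pderiv_smult X,
        simp_all add: poly_eq_iff algebra_simps)
  finally show ?case by simp
qed simp

lemma higher_pderiv_pcompose_reflect:
  "(pderiv ^^ k) (f \<circ>\<^sub>p [:w, -1:]) = smult ((-1) ^ k) (((pderiv ^^ k) f) \<circ>\<^sub>p [:w, -1:])"
  for f :: "'a :: idom poly"
  by (induction k) (simp_all add: pderiv_smult pderiv_pcompose pderiv_pCons mult.commute)

lemma pderiv_phi_Suc: "pderiv (phi (Suc m)) = phi m"
proof -
  have "of_nat (Suc m) * (1 / of_nat (fact (Suc m))) = (1 / of_nat (fact m) :: complex)"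
    by (simp only: fact_Suc of_nat_mult) (simp add: field_simps del: of_nat_Suc of_nat_fact)
  then show ?thesis
    unfolding phi_def pderiv_monom by simp
qed

lemma higher_pderiv_phi: "(pderiv ^^ j) (phi m) = (if j \<le> m then phi (m - j) else 0)"
proof (induction j arbitrary: m)
  case (Suc j)
  have "pderiv (phi 0) = 0"
    by (simp add: phi_def pderiv_monom)
  with Suc show ?case
    by (cases m) (simp_all add: funpow_Suc_right pderiv_phi_Suc del: funpow.simps)
qed simp

lemma degree_phi: "degree (phi m) = m"
  by (simp add: phi_def degree_monom_eq)

lemma poly_phi_0: "poly (phi m) 0 = (if m = 0 then 1 else 0)"
  by (simp add: phi_def poly_monom)

lemma Z_phi: "n \<ge> 1 \<Longrightarrow> Z (phi n) = {0}"
  by (auto simp: Z_def phi_def poly_monom)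

section \<open>Apolarity and polar derivatives\<close>

text \<open>For degree p, degree g \<le> N this polynomial is constant, and its value is the apolar
  form of p and g (up to normalisation); only its value at 0 is used.\<close>

definition apolar :: "nat \<Rightarrow> 'a :: idom poly \<Rightarrow> 'a poly \<Rightarrow> 'a poly" where
  "apolar N p g = (\<Sum>k\<le>N. smult ((-1) ^ k) ((pderiv ^^ (N - k)) p * (pderiv ^^ k) g))"

text \<open>The polar derivative of g with respect to u, g regarded as of degree N + 1.\<close>

definition polar_deriv :: "nat \<Rightarrow> 'a :: idom \<Rightarrow> 'a poly \<Rightarrow> 'a poly" where
  "polar_deriv N u g = smult (of_nat (Suc N)) g - [:-u, 1:] * pderiv g"

lemma poly_polar_deriv:
  "poly (polar_deriv N u g) z = of_nat (Suc N) * poly g z - (z - u) * poly (pderiv g) z"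
  by (simp add: polar_deriv_def algebra_simps)

lemma degree_polar_deriv_le:
  assumes "degree g \<le> Suc N"
  shows "degree (polar_deriv N u g) \<le> N"
proof (rule degree_le, intro allI impI)
  fix i assume "N < i"
  then consider "i = Suc N" | j where "i = Suc j" "Suc N \<le> j"
    by (metis Suc_le_eq lessE)
  then show "coeff (polar_deriv N u g) i = 0"
    by cases (use assms in \<open>auto simp: polar_deriv_def coeff_pderiv coeff_eq_0 algebra_simps\<close>)
qed

lemma higher_pderiv_polar_deriv:
  fixes g :: "'a :: idom poly"
  shows "(pderiv ^^ k) (polar_deriv N u g) =
           smult (of_nat (Suc N) - of_nat k) ((pderiv ^^ k) g) - [:-u, 1:] * (pderiv ^^ Suc k) g"
proof -
  have "smult (of_nat k) ((pderiv ^^ (k - 1)) (pderiv g)) = smult (of_nat k) ((pderiv ^^ k) g)"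
    by (cases k) (simp_all add: funpow_Suc_right del: funpow.simps)
  then show ?thesis
    unfolding polar_deriv_def higher_pderiv_diff higher_pderiv_smult higher_pderiv_linear_mult
    by (simp add: funpow_Suc_right algebra_simps smult_diff_left del: funpow.simps)
qed

lemma smult_sum_right: "smult c (\<Sum>i\<in>S. f i) = (\<Sum>i\<in>S. smult c (f i))"
  by (induction S rule: infinite_finite_induct) (auto simp: smult_add_right)

lemma apolar_smult_left: "apolar N (smult c p) g = smult c (apolar N p g)"
  by (simp add: apolar_def higher_pderiv_smult smult_sum_right algebra_simps)

lemma apolar_linear_factor:
  fixes p g :: "'a :: idom poly"
  assumes "degree p \<le> N"
  shows "apolar (Suc N) ([:-u, 1:] * p) g = apolar N p (polar_deriv N u g)"
proof -
  define P where "P j = (pderiv ^^ j) p" for j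
  define G where "G j = (pderiv ^^ j) g" for j
  have P_vanish: "P (Suc N) = 0"
    unfolding P_def using assms by (intro higher_pderiv_eq_0) auto
  have "apolar (Suc N) ([:-u, 1:] * p) g =
          (\<Sum>k\<le>Suc N. smult ((-1) ^ k) ([:-u, 1:] * P (Suc N - k) * G k))
        + (\<Sum>k\<le>Suc N. smult ((-1) ^ k * of_nat (Suc N - k)) (P (N - k) * G k))"
    unfolding apolar_def higher_pderiv_linear_mult P_def G_def
    by (simp add: sum.distrib[symmetric] Suc_diff_le)
      (intro sum.cong refl, simp add: poly_eq_iff algebra_simps)
  also have "(\<Sum>k\<le>Suc N. smult ((-1) ^ k) ([:-u, 1:] * P (Suc N - k) * G k)) =
               (\<Sum>k\<le>N. smult ((-1) ^ Suc k) ([:-u, 1:] * P (N - k) * G (Suc k)))"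
    by (subst sum.atMost_Suc_shift) (simp add: P_vanish)
  also have "(\<Sum>k\<le>Suc N. smult ((-1) ^ k * of_nat (Suc N - k)) (P (N - k) * G k)) =
               (\<Sum>k\<le>N. smult ((-1) ^ k * of_nat (Suc N - k)) (P (N - k) * G k))"
    by simp
  also have "(\<Sum>k\<le>N. smult ((-1) ^ Suc k) ([:-u, 1:] * P (N - k) * G (Suc k)))
        + (\<Sum>k\<le>N. smult ((-1) ^ k * of_nat (Suc N - k)) (P (N - k) * G k)) =
          apolar N p (polar_deriv N u g)"
    unfolding apolar_def higher_pderiv_polar_deriv sum.distrib[symmetric]
  proof (rule sum.cong[OF refl])
    fix k assume "k \<in> {..N}"
    then have "of_nat (Suc N - k) = (of_nat (Suc N) - of_nat k :: 'a)"
      by (simp add: of_nat_diff)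
    then show "smult ((-1) ^ Suc k) ([:-u, 1:] * P (N - k) * G (Suc k))
        + smult ((-1) ^ k * of_nat (Suc N - k)) (P (N - k) * G k) =
      smult ((-1) ^ k) ((pderiv ^^ (N - k)) p *
        (smult (of_nat (Suc N) - of_nat k) ((pderiv ^^ k) g) - [:-u, 1:] * (pderiv ^^ Suc k) g))"
      by (simp only: P_def G_def) (simp add: poly_eq_iff algebra_simps)
  qed
  finally show ?thesis .
qed

section \<open>The theorems of Laguerre and Grace\<close>

lemma poly_pderiv_prod_linear:
  fixes r :: "nat \<Rightarrow> complex"
  assumes "poly (\<Prod>i<m. [:-r i, 1:]) z \<noteq> 0"
  shows "poly (pderiv (\<Prod>i<m. [:-r i, 1:])) z = poly (\<Prod>i<m. [:-r i, 1:]) z * (\<Sum>i<m. 1 / (z - r i))"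
  using assms
proof (induction m)
  case (Suc m)
  let ?Q = "\<Prod>i<m. [:-r i, 1:]"
  have ne: "poly ?Q z \<noteq> 0" "z - r m \<noteq> 0"
    using Suc.prems by auto
  have "pderiv (\<Prod>i<Suc m. [:-r i, 1:]) = pderiv ?Q * [:-r m, 1:] + ?Q"
    by (simp add: pderiv_mult pderiv_pCons del: mult_pCons_right mult_pCons_left)
  then have "poly (pderiv (\<Prod>i<Suc m. [:-r i, 1:])) z = poly (pderiv ?Q) z * (z - r m) + poly ?Q z"
    by (simp only: poly_add poly_mult) simp
  also have "\<dots> = poly (\<Prod>i<Suc m. [:-r i, 1:]) z * (\<Sum>i<Suc m. 1 / (z - r i))"
    using Suc.IH ne by (simp add: field_simps)
  finally show ?case .
qed simp

lemma disc_form_at_inverse: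
  fixes z x :: complex
  assumes "z \<noteq> x"
  shows "(norm z ^ 2 - R ^ 2) * norm (1 / (z - x)) ^ 2 - 2 * Re (z * (1 / (z - x))) + 1 =
           (norm x ^ 2 - R ^ 2) / norm (z - x) ^ 2"
proof -
  have "(norm z ^ 2 - R ^ 2) * norm w ^ 2 - 2 * Re (z * w) + 1 = norm (z * w - 1) ^ 2 - R ^ 2 * norm w ^ 2"
    for w :: complex
    unfolding cmod_power2 by (simp add: algebra_simps power2_eq_square)
  moreover have "z * (1 / (z - x)) - 1 = x / (z - x)"
    using assms by (simp add: field_simps)
  ultimately show ?thesis
    by (simp only:) (simp add: norm_divide power_divide diff_divide_distrib)
qed

lemma sum_disc_form_le:
  fixes w :: "nat \<Rightarrow> complex" and z :: complex and \<alpha> M :: real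
  defines "F \<equiv> \<lambda>v. \<alpha> * norm v ^ 2 - 2 * Re (z * v) + 1"
  assumes "\<alpha> \<le> 0" and "real m \<le> M" and "0 < M"
  shows "(\<Sum>i<m. F (w i)) + (M - real m) \<le> M * F ((\<Sum>i<m. w i) / of_real M)"
proof -
  define S where "S = (\<Sum>i<m. w i)"
  have "norm S ^ 2 \<le> (\<Sum>i<m. norm (w i)) ^ 2"
    unfolding S_def by (intro power_mono norm_sum) auto
  also have "\<dots> \<le> (\<Sum>i<m. norm (w i) ^ 2) * real m"
    using sum_squared_le_sum_of_squares[of "\<lambda>i. norm (w i)" "{..<m}"] by simp
  also have "\<dots> \<le> (\<Sum>i<m. norm (w i) ^ 2) * M"
    using assms(3) by (intro mult_left_mono sum_nonneg) auto
  finally have "norm S ^ 2 / M \<le> (\<Sum>i<m. norm (w i) ^ 2)"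
    using assms(4) by (simp add: divide_le_eq)
  then have "\<alpha> * (\<Sum>i<m. norm (w i) ^ 2) \<le> \<alpha> * (norm S ^ 2 / M)"
    using assms(2) by (rule mult_left_mono_neg)
  moreover have "(\<Sum>i<m. F (w i)) = \<alpha> * (\<Sum>i<m. norm (w i) ^ 2) - 2 * Re (z * S) + real m"
    unfolding F_def S_def
    by (simp add: sum.distrib sum_subtractf sum_distrib_left Re_sum)
  moreover have "M * F (S / of_real M) = \<alpha> * (norm S ^ 2 / M) - 2 * Re (z * S) + M"
    using assms(4) unfolding F_def
    by (simp add: norm_divide power_divide field_simps power2_eq_square)
  ultimately show ?thesis
    unfolding S_def by simp
qed

theorem laguerre_polar_deriv:
  fixes g :: "complex poly"
  assumes "g \<noteq> 0" and "degree g \<le> Suc N"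
    and roots_outside: "\<And>x. poly g x = 0 \<Longrightarrow> R < norm x"
    and "norm u \<le> R" and "norm z \<le> R"
  shows "poly (polar_deriv N u g) z \<noteq> 0"
proof
  assume root: "poly (polar_deriv N u g) z = 0"
  define m where "m = degree g"
  obtain r where g_eq: "g = smult (lead_coeff g) (\<Prod>i<m. [:-r i, 1:])"
    unfolding m_def by (metis complex_poly_decompose')
  have roots_r: "R < norm (r i)" if "i < m" for i
  proof -
    have "poly g (r i) = 0"
      using that by (subst g_eq) (auto simp: poly_prod)
    then show ?thesis
      by (rule roots_outside)
  qed
  have gz: "poly g z \<noteq> 0"
    using roots_outside[of z] \<open>norm z \<le> R\<close> by force
  define S where "S = (\<Sum>i<m. 1 / (z - r i))"
  have "poly (\<Prod>i<m. [:-r i, 1:]) z \<noteq> 0"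
    using gz by (metis g_eq poly_smult mult_zero_right)
  then have "poly (pderiv g) z = poly g z * S"
    unfolding S_def by (subst (1 2) g_eq) (simp add: pderiv_smult poly_pderiv_prod_linear)
  with root gz have S_eq: "of_nat (Suc N) = (z - u) * S"
    by (simp add: poly_polar_deriv)
  then have "z \<noteq> u"
    by (metis mult_eq_0_iff of_nat_eq_0_iff right_minus_eq nat.distinct(1))
  define M where "M = real (Suc N)"
  define F where "F v = (norm z ^ 2 - R ^ 2) * norm v ^ 2 - 2 * Re (z * v) + 1" for v
  \<comment> \<open>F (1 / (z - x)) has the sign of norm x - R.  Since F is concave and 1 / (z - u) is the
    mean of the 1 / (z - r i) padded with M - m zeros, F (1 / (z - u)) would have to be positive.\<close>
  have "F (1 / (z - r i)) > 0" if "i < m" for i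
  proof -
    have "0 \<le> R"
      using \<open>norm z \<le> R\<close> norm_ge_zero[of z] by linarith
    then have "z \<noteq> r i" "R ^ 2 < norm (r i) ^ 2"
      using roots_r[OF that] \<open>norm z \<le> R\<close> by (auto intro: power_strict_mono)
    then show ?thesis
      unfolding F_def disc_form_at_inverse[OF \<open>z \<noteq> r i\<close>] by simp
  qed
  then have "(\<Sum>i<m. F (1 / (z - r i))) + (M - real m) > 0"
    using \<open>degree g \<le> Suc N\<close> unfolding M_def m_def
    by (cases "degree g = 0") (auto intro!: add_pos_nonneg sum_pos)
  also have "\<dots> \<le> M * F (S / of_real M)"
    unfolding F_def S_def
    using \<open>norm z \<le> R\<close> \<open>degree g \<le> Suc N\<close> norm_ge_zero[of z] unfolding M_def m_def
    by (intro sum_disc_form_le) (auto simp: abs_le_square_iff power_mono)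
  also have "S / of_real M = 1 / (z - u)"
  proof -
    have "of_real M \<noteq> (0 :: complex)"
      by (simp only: M_def of_real_of_nat_eq of_nat_eq_0_iff nat.distinct(1) not_False_eq_True)
    moreover have "S = of_real M / (z - u)"
      using S_eq \<open>z \<noteq> u\<close> unfolding M_def by (simp add: field_simps)
    ultimately show ?thesis
      by simp
  qed
  also have "F (1 / (z - u)) \<le> 0"
    using \<open>norm u \<le> R\<close> norm_ge_zero[of u]
    unfolding F_def disc_form_at_inverse[OF \<open>z \<noteq> u\<close>]
    by (simp add: divide_nonpos_nonneg power_mono)
  finally show False
    unfolding M_def by (simp add: mult_le_0_iff)
qed

theorem grace_apolar:
  fixes r :: "nat \<Rightarrow> complex" and g :: "complex poly"
  assumes "g \<noteq> 0" and "degree g \<le> N"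
    and "\<And>i. i < N \<Longrightarrow> norm (r i) \<le> R"
    and "\<And>x. poly g x = 0 \<Longrightarrow> R < norm x"
  shows "poly (apolar N (\<Prod>i<N. [:-r i, 1:]) g) 0 \<noteq> 0"
  using assms
proof (induction N arbitrary: g)
  case 0
  then show ?case
    by (auto simp: apolar_def elim: degree_eq_zeroE)
next
  case (Suc N)
  define h where "h = polar_deriv N (r N) g"
  have h_roots: "poly h x \<noteq> 0" if "norm x \<le> R" for x
    unfolding h_def using Suc.prems that by (intro laguerre_polar_deriv) auto
  have "0 \<le> R"
    using Suc.prems(3)[of N] norm_ge_zero[of "r N"] by linarith
  then have "h \<noteq> 0"
    using h_roots[of 0] by auto
  moreover have "degree h \<le> N"
    unfolding h_def using Suc.prems(2) by (rule degree_polar_deriv_le)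
  ultimately have "poly (apolar N (\<Prod>i<N. [:-r i, 1:]) h) 0 \<noteq> 0"
    using Suc.prems h_roots by (intro Suc.IH) (auto simp: not_le[symmetric])
  moreover have "apolar (Suc N) ([:-r N, 1:] * (\<Prod>i<N. [:-r i, 1:])) g = apolar N (\<Prod>i<N. [:-r i, 1:]) h"
    unfolding h_def by (intro apolar_linear_factor) (simp add: degree_prod_sum_eq)
  ultimately show ?case
    by (metis prod.lessThan_Suc mult.commute)
qed

section \<open>Differential operators\<close>

lemma diffop_phi: "diffop n c (phi n) = (\<Sum>j\<le>n. smult (c j) (phi (n - j)))"
  unfolding diffop_def by (intro sum.cong refl) (simp add: higher_pderiv_phi)

lemma diffop_0 [simp]: "diffop n a 0 = 0"
  by (simp add: diffop_def)

lemma diffop_const: "diffop n a [:c:] = [:a 0 * c:]"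
proof -
  have "diffop n a [:c:] = (\<Sum>k\<le>n. if k = 0 then [:a 0 * c:] else 0)"
    unfolding diffop_def by (intro sum.cong refl) (auto simp: higher_pderiv_eq_0)
  then show ?thesis
    by simp
qed

lemma degree_diffop_le: "degree (diffop n c f) \<le> degree f"
  unfolding diffop_def
  by (intro degree_sum_le) (auto intro: order.trans[OF degree_smult_le] simp: degree_higher_pderiv)

lemma degree_diffop_phi:
  assumes "c 0 \<noteq> 0"
  shows "degree (diffop n c (phi n)) = n"
proof (rule antisym)
  show "degree (diffop n c (phi n)) \<le> n"
    using degree_diffop_le[of n c "phi n"] by (simp add: degree_phi)
  have "coeff (diffop n c (phi n)) n = (\<Sum>j\<le>n. if j = 0 then c 0 / of_nat (fact n) else 0)"
    unfolding diffop_phi coeff_sum by (intro sum.cong refl) (auto simp: coeff_monom phi_def)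
  with assms have "coeff (diffop n c (phi n)) n \<noteq> 0"
    by simp
  then show "n \<le> degree (diffop n c (phi n))"
    by (rule le_degree)
qed

lemma poly_higher_pderiv_diffop_phi:
  assumes "k \<le> n"
  shows "poly ((pderiv ^^ (n - k)) (diffop n c (phi n))) 0 = c k"
proof -
  have "poly ((pderiv ^^ (n - k)) (diffop n c (phi n))) 0 =
          (\<Sum>j\<le>n. c j * poly ((pderiv ^^ (n - k)) (phi (n - j))) 0)"
    unfolding diffop_phi higher_pderiv_sum higher_pderiv_smult by (simp add: poly_sum)
  also have "\<dots> = (\<Sum>j\<le>n. if j = k then c j else 0)"
    using assms by (intro sum.cong refl) (auto simp: higher_pderiv_phi poly_phi_0)
  finally show ?thesis
    using assms by simp
qed

lemma poly_apolar_diffop_phi: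
  "poly (apolar n (diffop n c (phi n)) (f \<circ>\<^sub>p [:w, -1:])) 0 = poly (diffop n c f) w"
proof -
  have "poly (apolar n (diffop n c (phi n)) (f \<circ>\<^sub>p [:w, -1:])) 0 =
          (\<Sum>k\<le>n. (-1) ^ k * (c k * ((-1) ^ k * poly ((pderiv ^^ k) f) w)))"
    unfolding apolar_def poly_sum
    by (intro sum.cong refl)
      (simp add: poly_higher_pderiv_diffop_phi higher_pderiv_pcompose_reflect poly_pcompose)
  also have "\<dots> = poly (diffop n c f) w"
    unfolding diffop_def poly_sum by (intro sum.cong refl) (simp flip: power_add)
  finally show ?thesis .
qed

lemma norm_le_rho: "p \<noteq> 0 \<Longrightarrow> poly p x = 0 \<Longrightarrow> norm x \<le> rho p"
  unfolding rho_def Z_def by (intro Max_ge) (auto intro: poly_roots_finite)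

theorem diffop_root_near_root:
  assumes "c 0 \<noteq> 0" and "f \<noteq> 0" and "degree f \<le> n"
    and "poly (diffop n c f) w = 0"
  shows "\<exists>z. poly f z = 0 \<and> cmod (z - w) \<le> rho (diffop n c (phi n))"
proof (rule ccontr)
  assume far: "\<nexists>z. poly f z = 0 \<and> cmod (z - w) \<le> rho (diffop n c (phi n))"
  define p where "p = diffop n c (phi n)"
  define g where "g = f \<circ>\<^sub>p [:w, -1:]"
  have "degree p = n"
    unfolding p_def using assms(1) by (rule degree_diffop_phi)
  then obtain r where p_eq: "p = smult (lead_coeff p) (\<Prod>i<n. [:-r i, 1:])"
    by (metis complex_poly_decompose')
  have "p \<noteq> 0"
    using p_eq assms(1) poly_higher_pderiv_diffop_phi[of 0 n c] unfolding p_def by auto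
  have "poly p (r i) = 0" if "i < n" for i
    using that by (subst p_eq) (auto simp: poly_prod)
  then have r_in_disc: "norm (r i) \<le> rho p" if "i < n" for i
    using that \<open>p \<noteq> 0\<close> by (simp add: norm_le_rho)
  have poly_g: "poly g x = poly f (w - x)" for x
    by (simp add: g_def poly_pcompose)
  have "g \<noteq> 0"
  proof
    assume "g = 0"
    then have "poly f y = 0" for y
      using poly_g[of "w - y"] by simp
    with assms(2) show False
      using poly_all_0_iff_0 by blast
  qed
  moreover have "degree g \<le> n"
    using assms(3) by (simp add: g_def degree_pcompose)
  moreover have "rho p < norm x" if "poly g x = 0" for x
  proof -
    have "poly f (w - x) = 0"
      using that by (simp add: poly_g)
    with far have "\<not> cmod ((w - x) - w) \<le> rho p"
      unfolding p_def by blast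
    then show ?thesis
      by simp
  qed
  ultimately have "poly (apolar n (\<Prod>i<n. [:-r i, 1:]) g) 0 \<noteq> 0"
    using r_in_disc by (intro grace_apolar[where R = "rho p"])
  then have "poly (apolar n p g) 0 \<noteq> 0"
    using \<open>p \<noteq> 0\<close> by (subst p_eq) (simp add: apolar_smult_left)
  then show False
    using assms(4) unfolding p_def g_def poly_apolar_diffop_phi by simp
qed

lemma diffop_diffop:
  assumes "degree p \<le> n"
  shows "diffop n a (diffop n b p) = (\<Sum>m\<le>n. smult (fps_nth (Abs_fps a * Abs_fps b) m) ((pderiv ^^ m) p))"
proof -
  define t where "t i j = smult (a i * b j) ((pderiv ^^ (i + j)) p)" for i j
  have "diffop n a (diffop n b p) = (\<Sum>i\<le>n. \<Sum>j\<le>n. t i j)"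
    unfolding diffop_def higher_pderiv_sum higher_pderiv_smult t_def
    by (simp add: smult_sum_right funpow_add)
  also have "\<dots> = (\<Sum>(i, j)\<in>{..n} \<times> {..n}. t i j)"
    by (rule sum.cartesian_product)
  also have "\<dots> = (\<Sum>(i, j)\<in>{(i, j). i + j \<le> n}. t i j)"
    using assms by (intro sum.mono_neutral_right) (auto simp: t_def intro!: higher_pderiv_eq_0)
  also have "\<dots> = (\<Sum>m\<le>n. \<Sum>i\<le>m. t i (m - i))"
    by (rule sum.triangle_reindex_eq)
  also have "\<dots> = (\<Sum>m\<le>n. smult (fps_nth (Abs_fps a * Abs_fps b) m) ((pderiv ^^ m) p))"
    by (simp add: t_def fps_mult_nth atLeast0AtMost smult_sum)
  finally show ?thesis .
qed

lemma diffop_diffop_eq_self: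
  assumes "Abs_fps a * Abs_fps b = 1" and "degree p \<le> n"
  shows "diffop n a (diffop n b p) = p"
proof -
  have "diffop n a (diffop n b p) = (\<Sum>m\<le>n. if m = 0 then p else 0)"
    unfolding diffop_diffop[OF assms(2)] assms(1) by (intro sum.cong refl) auto
  then show ?thesis
    by simp
qed

lemma diffop_inverse:
  assumes "a 0 \<noteq> 0"
  obtains b where "b 0 \<noteq> 0"
    and "\<And>p. degree p \<le> n \<Longrightarrow> diffop n a (diffop n b p) = p"
    and "\<And>p. degree p \<le> n \<Longrightarrow> diffop n b (diffop n a p) = p"
proof
  define A where "A = Abs_fps a"
  have "fps_nth A 0 \<noteq> 0"
    using assms by (simp add: A_def)
  then show "fps_nth (inverse A) 0 \<noteq> 0"
    by simp
  show "diffop n a (diffop n (fps_nth (inverse A)) p) = p"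
    and "diffop n (fps_nth (inverse A)) (diffop n a p) = p" if "degree p \<le> n" for p
    using that inverse_mult_eq_1[OF \<open>fps_nth A 0 \<noteq> 0\<close>] inverse_mult_eq_1'[OF \<open>fps_nth A 0 \<noteq> 0\<close>]
    unfolding A_def by (auto intro!: diffop_diffop_eq_self simp: fps_nth_inverse)
qed

lemma inj_on_diffop_imp_coeff_0_nonzero:
  assumes "inj_on (diffop n a) (Pn n)"
  shows "a 0 \<noteq> 0"
proof
  assume "a 0 = 0"
  then have "diffop n a [:1:] = diffop n a 0"
    by (simp add: diffop_const)
  moreover have "[:1:] \<in> Pn n" "0 \<in> Pn n"
    by (simp_all add: Pn_def)
  ultimately show False
    using inj_onD[OF assms] by fastforce
qed

section \<open>Hausdorff distance between zero sets\<close>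

lemma Z_finite: "p \<noteq> 0 \<Longrightarrow> finite (Z p)"
  unfolding Z_def by (rule poly_roots_finite)

lemma Z_not_UNIV: "p \<noteq> 0 \<Longrightarrow> Z p \<noteq> UNIV"
  using Z_finite infinite_UNIV_char_0[where 'a = complex] by metis

lemma Z_nonempty: "0 < degree p \<Longrightarrow> Z p \<noteq> {}"
  unfolding Z_def using fundamental_theorem_of_algebra constant_degree by force

lemma rho_nonneg:
  assumes "0 < degree p"
  shows "0 \<le> rho p"
proof -
  obtain x where "poly p x = 0"
    using Z_nonempty[OF assms] by (auto simp: Z_def)
  with assms have "norm x \<le> rho p"
    by (intro norm_le_rho) auto
  then show ?thesis
    using norm_ge_zero[of x] by linarith
qed

lemma d_h_Z_le:
  assumes "0 < degree p" and "0 < degree q"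
    and "\<And>y. poly q y = 0 \<Longrightarrow> \<exists>x. poly p x = 0 \<and> cmod (x - y) \<le> r"
  shows "d_h (Z p) (Z q) \<le> ereal r"
proof -
  have "p \<noteq> 0" "q \<noteq> 0"
    using assms(1,2) by auto
  with assms(1,2) have fin: "finite (Z p)" "finite (Z q)" and ne: "Z p \<noteq> {}" "Z q \<noteq> {}"
    and not_univ: "Z p \<noteq> UNIV" "Z q \<noteq> UNIV"
    by (simp_all add: Z_finite Z_nonempty Z_not_UNIV)
  have "Min ((\<lambda>x. cmod (x - y)) ` Z p) \<le> r" if "y \<in> Z q" for y
  proof -
    obtain x where "x \<in> Z p" "cmod (x - y) \<le> r"
      using assms(3) \<open>y \<in> Z q\<close> by (auto simp: Z_def)
    then show ?thesis
      using fin(1) by (meson Min_le finite_imageI image_eqI order.trans)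
  qed
  then show ?thesis
    using fin ne not_univ by (simp add: d_h_def)
qed

lemma d_H_singleton_0_Z:
  assumes "0 < degree p"
  shows "d_H {0} (Z p) = ereal (rho p)" and "d_H (Z p) {0} = ereal (rho p)"
proof -
  have "p \<noteq> 0"
    using assms by auto
  with assms have fin: "finite (Z p)" and ne: "Z p \<noteq> {}" and "Z p \<noteq> UNIV"
    by (simp_all add: Z_finite Z_nonempty Z_not_UNIV)
  have "{0 :: complex} \<noteq> UNIV"
    using Z_not_UNIV[of "[:0, 1:]"] by (simp add: Z_def)
  with ne \<open>Z p \<noteq> UNIV\<close> have "d_h {0} (Z p) = ereal (rho p)"
    by (simp add: d_h_def rho_def image_image)
  moreover have "d_h (Z p) {0} \<le> ereal (rho p)"
  proof -
    obtain y where "y \<in> Z p"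
      using ne by auto
    with fin have "Min (norm ` Z p) \<le> Max (norm ` Z p)"
      by (meson Max_ge Min_le finite_imageI imageI order.trans)
    with fin ne \<open>Z p \<noteq> UNIV\<close> \<open>{0} \<noteq> UNIV\<close> show ?thesis
      by (simp add: d_h_def rho_def)
  qed
  ultimately show "d_H {0} (Z p) = ereal (rho p)" "d_H (Z p) {0} = ereal (rho p)"
    by (simp_all add: d_H_def max_def)
qed

lemma d_H_Z_phi_diffop:
  assumes "n \<ge> 1" and "c 0 \<noteq> 0"
  shows "d_H (Z (phi n)) (Z (diffop n c (phi n))) = ereal (rho (diffop n c (phi n)))"
    and "d_H (Z (diffop n c (phi n))) (Z (phi n)) = ereal (rho (diffop n c (phi n)))"
  using d_H_singleton_0_Z[of "diffop n c (phi n)"] assms by (simp_all add: Z_phi degree_diffop_phi)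

lemma d_H_Z_diffop_le:
  assumes "n \<ge> 1" and "a 0 \<noteq> 0" and "b 0 \<noteq> 0"
    and inverse: "\<And>p. degree p \<le> n \<Longrightarrow> diffop n b (diffop n a p) = p"
    and "degree f \<le> n"
  shows "d_H (Z f) (Z (diffop n a f)) \<le> ereal (max (rho (diffop n a (phi n))) (rho (diffop n b (phi n))))"
proof -
  have "0 \<le> rho (diffop n a (phi n))"
    using assms(1,2) by (intro rho_nonneg) (simp add: degree_diffop_phi)
  then have nonneg: "0 \<le> ereal (max (rho (diffop n a (phi n))) (rho (diffop n b (phi n))))"
    by (simp add: le_max_iff_disj)
  consider "f = 0" | c where "f = [:c:]" "c \<noteq> 0" | "0 < degree f"
    by (metis degree_eq_zeroE gr0I pCons_0_0)
  then show ?thesis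
  proof cases
    case 1
    then show ?thesis
      using nonneg by (simp add: Z_def d_H_def d_h_def)
  next
    case (2 c)
    then have "Z f = {}" "Z (diffop n a f) = {}"
      using assms(2) by (auto simp: Z_def diffop_const)
    then show ?thesis
      using nonneg by (simp add: d_H_def d_h_def)
  next
    case 3
    have "degree f \<le> degree (diffop n a f)"
      using degree_diffop_le[of n b "diffop n a f"] inverse[OF assms(5)] by simp
    with 3 have "0 < degree (diffop n a f)"
      by simp
    have "d_h (Z f) (Z (diffop n a f)) \<le> ereal (rho (diffop n a (phi n)))"
      using 3 \<open>0 < degree (diffop n a f)\<close> assms(2,5)
      by (intro d_h_Z_le diffop_root_near_root) auto
    moreover have "d_h (Z (diffop n a f)) (Z f) \<le> ereal (rho (diffop n b (phi n)))"
      using 3 \<open>0 < degree (diffop n a f)\<close> assms(3,5) degree_diffop_le[of n a f] inverse[OF assms(5)]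
      by (intro d_h_Z_le diffop_root_near_root) auto
    ultimately show ?thesis
      unfolding d_H_def by (metis ereal_max max.mono)
  qed
qed

theorem mainTheorem5:
  fixes n :: nat and a :: "nat \<Rightarrow> complex"
  assumes "n \<ge> 1"
    and "bij_betw (diffop n a) (Pn n) (Pn n)"
  shows "K_H n (diffop n a) =
           ereal (max (rho (diffop n a (phi n)))
                      (rho (inv_into (Pn n) (diffop n a) (phi n))))
       \<and> K_H n (diffop n a) =
           max (d_H (Z (phi n)) (Z (diffop n a (phi n))))
               (d_H (Z (inv_into (Pn n) (diffop n a) (phi n))) (Z (phi n)))"
proof -
  have inj: "inj_on (diffop n a) (Pn n)"
    using assms(2) by (rule bij_betw_imp_inj_on)
  then have a0: "a 0 \<noteq> 0"
    by (rule inj_on_diffop_imp_coeff_0_nonzero)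
  obtain b where b0: "b 0 \<noteq> 0"
    and TS: "\<And>p. degree p \<le> n \<Longrightarrow> diffop n a (diffop n b p) = p"
    and ST: "\<And>p. degree p \<le> n \<Longrightarrow> diffop n b (diffop n a p) = p"
    using diffop_inverse[of a n, OF a0] by blast
  have deg_phi: "degree (phi n) \<le> n" "degree (diffop n b (phi n)) \<le> n"
    using degree_diffop_le[of n b "phi n"] by (simp_all add: degree_phi)
  have S_phi: "inv_into (Pn n) (diffop n a) (phi n) = diffop n b (phi n)"
    using inj deg_phi by (intro inv_into_f_eq) (auto simp: Pn_def TS)
  note d_H_a = d_H_Z_phi_diffop[of n a, OF assms(1) a0]
  note d_H_b = d_H_Z_phi_diffop[of n b, OF assms(1) b0]
  have "K_H n (diffop n a) = ereal (max (rho (diffop n a (phi n))) (rho (diffop n b (phi n))))"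
  proof (rule antisym)
    show "K_H n (diffop n a) \<le> ereal (max (rho (diffop n a (phi n))) (rho (diffop n b (phi n))))"
      unfolding K_H_def Pn_def using assms(1) a0 b0 ST by (intro SUP_least d_H_Z_diffop_le) auto
    have "d_H (Z (phi n)) (Z (diffop n a (phi n))) \<le> K_H n (diffop n a)"
      "d_H (Z (diffop n b (phi n))) (Z (diffop n a (diffop n b (phi n)))) \<le> K_H n (diffop n a)"
      unfolding K_H_def Pn_def using deg_phi by (auto intro: SUP_upper)
    then show "ereal (max (rho (diffop n a (phi n))) (rho (diffop n b (phi n)))) \<le> K_H n (diffop n a)"
      using d_H_a d_H_b TS[OF deg_phi(1)] by simp
  qed
  then show ?thesis
    using d_H_a d_H_b S_phi by simp
qed

end
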